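(* In the algorithm DMA, let $\alpha_t\ge1$ be the maximum number of packets that a server needs to send or receive at time slot $t$ in the merged schedule of Step 3. Then for every $t\in[0,(\mu+1/\beta)\Delta]$, $\mathbb{E}[\alpha_t]=O(g(m))$, where $g(m)=\log(m)/\log(\log(m))$.
   Context: Model. $m$ servers, each a sender and a receiver. A coflow is an $m\times m$ nonnegative integer matrix $(d_{sr})$ of unit packets from sender $s$ to receiver $r$. Each job $j\in\mathcal{N}$ has $\mu_j$ coflows $\mathcal{D}^{(cj)}$ and a DAG $G_j$ (edge $c_1\to c_2$: $c_2$ may not start before $c_1$ finishes). Each slot, each sender sends at most one and each receiver receives at most one packet. $\mu=\max_j\mu_j$. Effective size of a coflow: $D=\max\{\max_s\sum_rd_{sr},\max_r\sum_sd_{sr}\}$; $\Delta$ is the effective size of $\sum_j\sum_c\mathcal{D}^{(cj)}$. BNA: polynomial-time procedure scheduling all packets of a coflow of effective size $D$ feasibly in $D$ consecutive slots. Algorithm DMA (constant $\beta>1/e$): Step 1: for each job, schedule its coflows one after another in a topological order of $G_j$, each with BNA, starting at time $0$. Step 2: delay each job's schedule by an independent uniformly random integer in $[0,\Delta/\beta]$. Step 3: merge the delayed schedules slot by slot (capacity constraints may be violated). Step 4: replace each slot $t$ by $\alpha_t$ slots scheduled feasibly with BNA. *)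

theory Defs
  imports Complex_Main "HOL-Library.FuncSet"
begin

text \<open>Servers are 0..<m (each a sender and a receiver). A coflow is a matrix
  d :: nat => nat => nat, d s r = number of unit packets from sender s to receiver r
  (only entries with s,r < m are relevant).\<close>

definition eff_size :: "nat \<Rightarrow> (nat \<Rightarrow> nat \<Rightarrow> nat) \<Rightarrow> nat" where
  "eff_size m d =
     max (Max (insert 0 {\<Sum>r<m. d s r | s. s < m}))
         (Max (insert 0 {\<Sum>s<m. d s r | r. r < m}))"

text \<open>Delta: effective size of the sum of all coflows of all jobs.
  Job j has coflows d j c for c < mu j.\<close>
definition total_eff :: "nat \<Rightarrow> 'j set \<Rightarrow> ('j \<Rightarrow> nat) \<Rightarrow> ('j \<Rightarrow> nat \<Rightarrow> nat \<Rightarrow> nat \<Rightarrow> nat) \<Rightarrow> nat" where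
  "total_eff m N mu d = eff_size m (\<lambda>s r. \<Sum>j\<in>N. \<Sum>c<mu j. d j c s r)"

text \<open>Start slot of coflow c of job j in the Step 1 schedule: coflows are scheduled
  back to back in the topological order given by positions pos j (a permutation of 0..<mu j),
  each coflow occupying exactly its effective size many consecutive slots.\<close>
definition start_slot :: "nat \<Rightarrow> ('j \<Rightarrow> nat) \<Rightarrow> ('j \<Rightarrow> nat \<Rightarrow> nat \<Rightarrow> nat \<Rightarrow> nat)
     \<Rightarrow> ('j \<Rightarrow> nat \<Rightarrow> nat) \<Rightarrow> 'j \<Rightarrow> nat \<Rightarrow> nat" where
  "start_slot m mu d pos j c = (\<Sum>c'\<in>{c'. c' < mu j \<and> pos j c' < pos j c}. eff_size m (d j c'))"

text \<open>E j is the edge set of the DAG G_j on coflows 0..<mu j;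
  pos j is a topological order (pos j c = position of c); sigma j c t s r is the number of
  packets of coflow c of job j sent from s to r in slot t of job j's (undelayed) Step 1 schedule,
  which is a feasible (BNA-type) schedule of that coflow inside its window of D consecutive slots.\<close>
definition step1_schedule ::
  "nat \<Rightarrow> 'j set \<Rightarrow> ('j \<Rightarrow> nat) \<Rightarrow> ('j \<Rightarrow> nat \<Rightarrow> nat \<Rightarrow> nat \<Rightarrow> nat) \<Rightarrow> ('j \<Rightarrow> (nat \<times> nat) set)
   \<Rightarrow> ('j \<Rightarrow> nat \<Rightarrow> nat) \<Rightarrow> ('j \<Rightarrow> nat \<Rightarrow> nat \<Rightarrow> nat \<Rightarrow> nat \<Rightarrow> nat) \<Rightarrow> bool" where
  "step1_schedule m N mu d E pos sigma \<longleftrightarrow>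
     (\<forall>j\<in>N.
        E j \<subseteq> {0..<mu j} \<times> {0..<mu j} \<and> acyclic (E j) \<and>
        bij_betw (pos j) {0..<mu j} {0..<mu j} \<and>
        (\<forall>(c1, c2)\<in>E j. pos j c1 < pos j c2) \<and>
        (\<forall>c<mu j.
           let S = start_slot m mu d pos j c; D = eff_size m (d j c) in
           (\<forall>t s r. (t < S \<or> S + D \<le> t) \<longrightarrow> sigma j c t s r = 0) \<and>
           (\<forall>s<m. \<forall>r<m. (\<Sum>t\<in>{S..<S+D}. sigma j c t s r) = d j c s r) \<and>
           (\<forall>t. (\<forall>s<m. (\<Sum>r<m. sigma j c t s r) \<le> 1) \<and>
                (\<forall>r<m. (\<Sum>s<m. sigma j c t s r) \<le> 1))))"

text \<open>Step 2/3: with delay vector x, the merged schedule; number of packets server s sends /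
  receives in slot t.\<close>
definition send_load ::
  "nat \<Rightarrow> 'j set \<Rightarrow> ('j \<Rightarrow> nat) \<Rightarrow> ('j \<Rightarrow> nat \<Rightarrow> nat \<Rightarrow> nat \<Rightarrow> nat \<Rightarrow> nat) \<Rightarrow> ('j \<Rightarrow> nat)
   \<Rightarrow> nat \<Rightarrow> nat \<Rightarrow> nat" where
  "send_load m N mu sigma x t s =
     (\<Sum>j\<in>N. \<Sum>c<mu j. \<Sum>r<m. if x j \<le> t then sigma j c (t - x j) s r else 0)"

definition recv_load ::
  "nat \<Rightarrow> 'j set \<Rightarrow> ('j \<Rightarrow> nat) \<Rightarrow> ('j \<Rightarrow> nat \<Rightarrow> nat \<Rightarrow> nat \<Rightarrow> nat \<Rightarrow> nat) \<Rightarrow> ('j \<Rightarrow> nat)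
   \<Rightarrow> nat \<Rightarrow> nat \<Rightarrow> nat" where
  "recv_load m N mu sigma x t r =
     (\<Sum>j\<in>N. \<Sum>c<mu j. \<Sum>s<m. if x j \<le> t then sigma j c (t - x j) s r else 0)"

definition alpha ::
  "nat \<Rightarrow> 'j set \<Rightarrow> ('j \<Rightarrow> nat) \<Rightarrow> ('j \<Rightarrow> nat \<Rightarrow> nat \<Rightarrow> nat \<Rightarrow> nat \<Rightarrow> nat) \<Rightarrow> ('j \<Rightarrow> nat)
   \<Rightarrow> nat \<Rightarrow> nat" where
  "alpha m N mu sigma x t =
     max 1 (Max (insert 0 ({send_load m N mu sigma x t i | i. i < m} \<union>
                            {recv_load m N mu sigma x t i | i. i < m})))"

text \<open>Maximum delay: delays are uniform integers in [0, Delta/beta], i.e. in 0..floor(Delta/beta).\<close>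
definition max_delay :: "real \<Rightarrow> nat \<Rightarrow> nat" where
  "max_delay \<beta> \<Delta> = nat \<lfloor>real \<Delta> / \<beta>\<rfloor>"

text \<open>Expectation of alpha_t over independent uniform delays x j \<in> {0..L}, j \<in> N.\<close>
definition expected_alpha ::
  "real \<Rightarrow> nat \<Rightarrow> 'j set \<Rightarrow> ('j \<Rightarrow> nat) \<Rightarrow> ('j \<Rightarrow> nat \<Rightarrow> nat \<Rightarrow> nat \<Rightarrow> nat)
   \<Rightarrow> ('j \<Rightarrow> nat \<Rightarrow> nat \<Rightarrow> nat \<Rightarrow> nat \<Rightarrow> nat) \<Rightarrow> nat \<Rightarrow> real" where
  "expected_alpha \<beta> m N mu d sigma t =
     (let L = max_delay \<beta> (total_eff m N mu d);
          X = PiE N (\<lambda>_. {0..L})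
      in (\<Sum>x\<in>X. real (alpha m N mu sigma x t)) / real (card X))"

end

theory Submission
  imports Defs "HOL-Real_Asymp.Real_Asymp"
begin

(* Since n <= k + (n choose k) for k >= 1, alpha_t is at most k plus the sum, over all 2m
   send and receive loads of slot t, of (load choose k). Within one job's Step 1 schedule a
   server handles at most one packet per slot, so under independent uniform delays in
   {0..L} each load is a sum of independent 0/1 variables, one per job, whose means add up
   to at most Delta / (L + 1) <= beta. The k-th binomial moment of such a sum is at most
   beta^k / k!, whence E alpha_t <= k + 2 m beta^k / k! for every k >= 1 and every slot.
   Taking k about 2 ln m / ln ln m gives k ln k ~ 2 ln m, so m (e beta / k)^k -> 0 and
   E alpha_t <= 4 ln m / ln ln m for large m. *)

section \<open>Binomial moments of sums of independent indicators\<close>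

lemma sum_PiE_insert:
  assumes "a \<notin> S"
  shows "(\<Sum>x\<in>PiE (insert a S) T. G x) = (\<Sum>v\<in>T a. \<Sum>x\<in>PiE S T. G (x(a := v)))"
proof -
  have "(\<Sum>x\<in>PiE (insert a S) T. G x) = (\<Sum>(v, x)\<in>T a \<times> PiE S T. G (x(a := v)))"
    unfolding PiE_insert_eq by (subst sum.reindex[OF inj_combinator[OF assms]]) (simp add: comp_def split_def)
  then show ?thesis
    by (simp add: sum.cartesian_product)
qed

lemma choose_Suc_add_le_one:
  assumes "b \<le> (1::nat)"
  shows "(n + b) choose Suc k = (n choose Suc k) + b * (n choose k)"
  using assms by (cases b) auto

lemma power_Suc_add_ge_two_terms:
  fixes s p :: real
  assumes "0 \<le> s" "0 \<le> p"
  shows "s ^ Suc n + real (Suc n) * p * s ^ n \<le> (s + p) ^ Suc n"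
proof (induction n)
  case (Suc n)
  have "s ^ Suc (Suc n) + real (Suc (Suc n)) * p * s ^ Suc n
      \<le> (s + p) * (s ^ Suc n + real (Suc n) * p * s ^ n)"
    using assms by (simp add: algebra_simps)
  also have "\<dots> \<le> (s + p) * (s + p) ^ Suc n"
    using Suc assms by (intro mult_left_mono) auto
  finally show ?case by simp
qed simp

text \<open>Divided by \<open>card A ^ card N\<close>, both sides are expectations over independent uniform
  \<open>x j \<in> A\<close>: the binomial moment of a sum of independent indicators is at most the \<open>k\<close>-th
  power of the sum of their means, divided by \<open>fact k\<close>.\<close>
lemma sum_PiE_choose_le:
  fixes f :: "'j \<Rightarrow> 'a \<Rightarrow> nat"
  assumes "finite N" "finite A" "A \<noteq> {}" and "\<And>j v. j \<in> N \<Longrightarrow> f j v \<le> 1"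
  shows "(\<Sum>x\<in>PiE N (\<lambda>_. A). real ((\<Sum>j\<in>N. f j (x j)) choose k))
     \<le> real (card A) ^ card N * (\<Sum>j\<in>N. real (\<Sum>v\<in>A. f j v) / real (card A)) ^ k / fact k"
  using assms(1,4)
proof (induction N arbitrary: k rule: finite_induct)
  case empty
  then show ?case by (cases k) auto
next
  case (insert a N)
  define M where "M = real (card A)"
  define s where "s = (\<Sum>j\<in>N. real (\<Sum>v\<in>A. f j v) / M)"
  define p where "p = real (\<Sum>v\<in>A. f a v) / M"
  define F where "F k = (\<Sum>x\<in>PiE N (\<lambda>_. A). real ((\<Sum>j\<in>N. f j (x j)) choose k))" for k
  have M_pos: "M > 0"
    using assms(2,3) by (simp add: M_def card_gt_0_iff)
  have IH: "F k \<le> M ^ card N * s ^ k / fact k" for k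
    using insert by (simp add: F_def M_def s_def)
  have "s \<ge> 0" "p \<ge> 0"
    using M_pos by (auto simp: s_def p_def intro!: sum_nonneg divide_nonneg_nonneg)
  have sum_upd: "(\<Sum>j\<in>insert a N. f j ((x(a := v)) j)) = (\<Sum>j\<in>N. f j (x j)) + f a v" for x v
  proof -
    have "(\<Sum>j\<in>N. f j ((x(a := v)) j)) = (\<Sum>j\<in>N. f j (x j))"
      using insert.hyps(2) by (intro sum.cong) auto
    then show ?thesis
      using insert.hyps by simp
  qed
  have split_a: "(\<Sum>x\<in>PiE (insert a N) (\<lambda>_. A). real ((\<Sum>j\<in>insert a N. f j (x j)) choose k))
      = (\<Sum>v\<in>A. \<Sum>x\<in>PiE N (\<lambda>_. A). real (((\<Sum>j\<in>N. f j (x j)) + f a v) choose k))" for k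
    by (simp only: sum_PiE_insert[OF insert.hyps(2)] sum_upd)
  have means: "(\<Sum>j\<in>insert a N. real (\<Sum>v\<in>A. f j v) / M) = s + p"
    using insert.hyps by (simp add: s_def p_def)
  show ?case
  proof (cases k)
    case 0
    then show ?thesis
      using insert.hyps assms(2) by (simp add: card_PiE)
  next
    case (Suc k')
    have "(\<Sum>v\<in>A. \<Sum>x\<in>PiE N (\<lambda>_. A). real (((\<Sum>j\<in>N. f j (x j)) + f a v) choose Suc k'))
        = (\<Sum>v\<in>A. F (Suc k') + real (f a v) * F k')"
      using insert.prems by (simp add: F_def choose_Suc_add_le_one sum.distrib sum_distrib_left)
    also have "\<dots> = M * F (Suc k') + M * p * F k'"
      using M_pos by (simp add: M_def p_def sum.distrib sum_distrib_right)
    also have "\<dots> \<le> M * (M ^ card N * s ^ Suc k' / fact (Suc k')) + M * p * (M ^ card N * s ^ k' / fact k')"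
      using M_pos \<open>p \<ge> 0\<close> by (intro add_mono mult_left_mono IH) auto
    also have "\<dots> = M ^ Suc (card N) / fact (Suc k') * (s ^ Suc k' + real (Suc k') * p * s ^ k')"
      using fact_Suc[of k', where 'a=real] by (simp add: field_simps del: of_nat_Suc fact_Suc)
    also have "\<dots> \<le> M ^ Suc (card N) / fact (Suc k') * (s + p) ^ Suc k'"
      using power_Suc_add_ge_two_terms[OF \<open>s \<ge> 0\<close> \<open>p \<ge> 0\<close>] M_pos by (intro mult_left_mono) auto
    finally show ?thesis
      unfolding M_def[symmetric] split_a means card_insert_disjoint[OF insert.hyps] Suc
      by (simp add: mult.commute)
  qed
qed

lemma sum_delayed_le:
  fixes a :: "nat \<Rightarrow> nat"
  assumes "finite V"
  shows "(\<Sum>v\<in>V. if v \<le> t then a (t - v) else 0) \<le> (\<Sum>y\<le>t. a y)"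
proof -
  have "(\<Sum>v\<in>V. if v \<le> t then a (t - v) else 0) = (\<Sum>v\<in>V \<inter> {..t}. a (t - v))"
    using assms by (simp add: sum.inter_restrict)
  also have "\<dots> = (\<Sum>y\<in>(\<lambda>v. t - v) ` (V \<inter> {..t}). a y)"
    by (rule sum.reindex[symmetric, unfolded comp_def]) (auto simp: inj_on_def)
  also have "\<dots> \<le> (\<Sum>y\<le>t. a y)"
    by (rule sum_mono2) auto
  finally show ?thesis .
qed

lemma sum_PiE_delayed_choose_le:
  fixes a :: "'j \<Rightarrow> nat \<Rightarrow> nat"
  assumes "finite N" and a_le_1: "\<And>j y. j \<in> N \<Longrightarrow> a j y \<le> 1"
    and total: "(\<Sum>j\<in>N. \<Sum>y\<le>t. a j y) \<le> \<Delta>" and \<Delta>_le: "real \<Delta> \<le> \<beta> * real (Suc L)"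
  shows "(\<Sum>x\<in>PiE N (\<lambda>_. {0..L}). real ((\<Sum>j\<in>N. if x j \<le> t then a j (t - x j) else 0) choose k))
     \<le> real (Suc L) ^ card N * \<beta> ^ k / fact k"
proof -
  define f where "f j v = (if v \<le> t then a j (t - v) else 0)" for j v
  define s where "s = (\<Sum>j\<in>N. real (\<Sum>v\<in>{0..L}. f j v) / real (Suc L))"
  have "0 \<le> s"
    unfolding s_def by (auto intro!: sum_nonneg divide_nonneg_nonneg)
  have "(\<Sum>j\<in>N. \<Sum>v\<in>{0..L}. f j v) \<le> (\<Sum>j\<in>N. \<Sum>y\<le>t. a j y)"
    unfolding f_def by (intro sum_mono sum_delayed_le) simp
  also note total
  finally have "real (\<Sum>j\<in>N. \<Sum>v\<in>{0..L}. f j v) \<le> real \<Delta>"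
    by (simp only: of_nat_le_iff)
  then have "s \<le> real \<Delta> / real (Suc L)"
    unfolding s_def by (simp add: sum_divide_distrib[symmetric] divide_right_mono)
  also have "\<dots> \<le> \<beta>"
    using \<Delta>_le by (simp add: field_simps)
  finally have "s \<le> \<beta>" .
  have "(\<Sum>x\<in>PiE N (\<lambda>_. {0..L}). real ((\<Sum>j\<in>N. f j (x j)) choose k))
      \<le> real (Suc L) ^ card N * s ^ k / fact k"
    using sum_PiE_choose_le[of N "{0..L}" f k] assms(1) a_le_1 by (simp add: f_def s_def)
  also have "\<dots> \<le> real (Suc L) ^ card N * \<beta> ^ k / fact k"
    using \<open>0 \<le> s\<close> \<open>s \<le> \<beta>\<close> by (intro divide_right_mono mult_left_mono power_mono) auto
  finally show ?thesis
    by (simp add: f_def)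
qed

section \<open>Choosing the order of the moment\<close>

lemma le_add_choose:
  assumes "1 \<le> k"
  shows "n \<le> k + (n choose k)"
proof (induction n)
  case (Suc n)
  show ?case
  proof (cases "k \<le> n")
    case True
    then have "Suc (n choose k) \<le> Suc n choose k"
      using assms by (cases k) (auto simp: Suc_le_eq)
    then show ?thesis
      using Suc.IH by linarith
  qed simp
qed simp

lemma power_over_fact_le_exp:
  fixes x :: real
  assumes "0 \<le> x"
  shows "x ^ n / fact n \<le> exp x"
proof -
  have "x ^ n / fact n \<le> (\<Sum>i\<le>n. x ^ i / fact i)"
    using assms by (intro member_le_sum) auto
  also have "\<dots> \<le> exp x"
    using assms summable_exp_generic[of x]
    by (auto simp: exp_def divide_inverse ac_simps intro!: sum_le_suminf)
  finally show ?thesis .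
qed

lemma power_over_fact_le:
  fixes \<beta> :: real
  assumes "0 \<le> \<beta>" "0 < k"
  shows "\<beta> ^ k / fact k \<le> (exp 1 * \<beta> / real k) ^ k"
proof -
  have "\<beta> ^ k / fact k = (\<beta> / real k) ^ k * (real k ^ k / fact k)"
    using assms by (simp add: power_divide)
  also have "\<dots> \<le> (\<beta> / real k) ^ k * exp (real k)"
    using assms by (intro mult_left_mono power_over_fact_le_exp) auto
  also have "\<dots> = exp 1 ^ k * (\<beta> / real k) ^ k"
    using exp_of_nat_mult[of k "1 :: real"] by simp
  also have "\<dots> = (exp 1 * \<beta> / real k) ^ k"
    by (simp add: power_mult_distrib power_divide)
  finally show ?thesis .
qed

lemma exists_choose_bound:
  fixes \<beta> g y :: real
  assumes "0 < \<beta>" "1 \<le> g" "exp 1 * \<beta> \<le> g" "0 \<le> y" and tail: "y * (exp 1 * \<beta> / (2 * g)) powr (2 * g) < 1 / 2"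
  shows "\<exists>k\<ge>1. real k + 2 * y * \<beta> ^ k / fact k \<le> 4 * g"
proof (intro exI conjI)
  define k where "k = nat \<lceil>2 * g\<rceil>"
  have k_bounds: "2 * g \<le> real k" "real k \<le> 2 * g + 1"
    using assms(2) by (auto simp: k_def)
  then show "1 \<le> k"
    using assms(2) by linarith
  have "\<beta> ^ k / fact k \<le> (exp 1 * \<beta> / real k) ^ k"
    using assms(1) \<open>1 \<le> k\<close> by (intro power_over_fact_le) auto
  also have "\<dots> = (exp 1 * \<beta> / real k) powr real k"
    using assms(1) \<open>1 \<le> k\<close> by (simp add: powr_realpow)
  also have "\<dots> \<le> (exp 1 * \<beta> / real k) powr (2 * g)"
    using assms k_bounds by (intro powr_mono') (auto simp: field_simps)
  also have "\<dots> \<le> (exp 1 * \<beta> / (2 * g)) powr (2 * g)"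
    using assms k_bounds by (intro powr_mono2 frac_le) auto
  finally have "y * (\<beta> ^ k / fact k) \<le> y * (exp 1 * \<beta> / (2 * g)) powr (2 * g)"
    using \<open>0 \<le> y\<close> by (rule mult_left_mono)
  then show "real k + 2 * y * \<beta> ^ k / fact k \<le> 4 * g"
    using k_bounds tail assms(2) by simp
qed

lemma eventually_exists_choose_bound:
  fixes \<beta> :: real
  assumes "0 < \<beta>"
  shows "eventually (\<lambda>m. \<exists>k\<ge>1. real k + 2 * real m * \<beta> ^ k / fact k
                           \<le> 4 * (ln (real m) / ln (ln (real m)))) sequentially"
proof -
  define g where "g x = ln x / ln (ln x)" for x :: real
  have "filterlim g at_top at_top"
    unfolding g_def by real_asymp
  moreover have "((\<lambda>x. x * (exp 1 * \<beta> / (2 * g x)) powr (2 * g x)) \<longlongrightarrow> 0) at_top"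
    using assms unfolding g_def by real_asymp
  ultimately have "eventually (\<lambda>x. 1 \<le> g x) at_top" "eventually (\<lambda>x. exp 1 * \<beta> \<le> g x) at_top"
    "eventually (\<lambda>x. x * (exp 1 * \<beta> / (2 * g x)) powr (2 * g x) < 1 / 2) at_top"
    by (auto simp: filterlim_at_top dest: order_tendstoD(2)[where a = "1 / 2"])
  then have "eventually (\<lambda>x. 1 \<le> g x \<and> exp 1 * \<beta> \<le> g x \<and>
      x * (exp 1 * \<beta> / (2 * g x)) powr (2 * g x) < 1 / 2) at_top"
    by eventually_elim simp
  from eventually_compose_filterlim[OF this filterlim_real_sequentially]
  have "eventually (\<lambda>m. \<exists>k\<ge>1. real k + 2 * real m * \<beta> ^ k / fact k \<le> 4 * g (real m)) sequentially"
    by eventually_elim (intro exists_choose_bound[OF assms]; auto)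
  then show ?thesis
    unfolding g_def .
qed

section \<open>Step 1 schedules and the loads of the merged schedule\<close>

lemma row_sum_le_eff_size: "i < m \<Longrightarrow> (\<Sum>r<m. d i r) \<le> eff_size m d"
  unfolding eff_size_def by (rule le_trans[OF _ max.cobounded1], rule Max_ge) auto

lemma send_demand_le_total_eff:
  assumes "i < m"
  shows "(\<Sum>j\<in>N. \<Sum>c<mu j. \<Sum>r<m. d j c i r) \<le> total_eff m N mu d"
proof -
  have "(\<Sum>j\<in>N. \<Sum>c<mu j. \<Sum>r<m. d j c i r) = (\<Sum>r<m. \<Sum>j\<in>N. \<Sum>c<mu j. d j c i r)"
    by (simp add: sum.swap[of _ "{..<m}"])
  also have "\<dots> \<le> total_eff m N mu d"
    unfolding total_eff_def using assms by (rule row_sum_le_eff_size)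
  finally show ?thesis .
qed

lemma total_le_max_delay:
  assumes "0 < \<beta>"
  shows "real \<Delta> \<le> \<beta> * real (Suc (max_delay \<beta> \<Delta>))"
proof -
  have "real \<Delta> / \<beta> \<le> real (Suc (max_delay \<beta> \<Delta>))"
    using assms by (simp add: max_delay_def) linarith
  then show ?thesis
    using assms by (simp add: field_simps)
qed

lemma start_slot_add_eff_size_le:
  assumes "c1 < mu j" "pos j c1 < pos j c2"
  shows "start_slot m mu d pos j c1 + eff_size m (d j c1) \<le> start_slot m mu d pos j c2"
proof -
  define before where "before c = {c'. c' < mu j \<and> pos j c' < pos j c}" for c
  have "insert c1 (before c1) \<subseteq> before c2" "c1 \<notin> before c1" "finite (before c1)" "finite (before c2)"
    using assms by (auto simp: before_def)
  then have "eff_size m (d j c1) + (\<Sum>c'\<in>before c1. eff_size m (d j c'))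
      \<le> (\<Sum>c'\<in>before c2. eff_size m (d j c'))"
    using sum_mono2[of "before c2" "insert c1 (before c1)" "\<lambda>c'. eff_size m (d j c')"]
    by simp
  then show ?thesis
    by (simp add: start_slot_def before_def)
qed

definition transposed :: "(nat \<Rightarrow> nat \<Rightarrow> 'a) \<Rightarrow> nat \<Rightarrow> nat \<Rightarrow> 'a" where
  "transposed d s r = d r s"

lemma eff_size_transposed: "eff_size m (transposed d) = eff_size m d"
  by (simp add: eff_size_def transposed_def max.commute)

lemma total_eff_transposed: "total_eff m N mu (\<lambda>j c. transposed (d j c)) = total_eff m N mu d"
proof -
  have "(\<lambda>s r. \<Sum>j\<in>N. \<Sum>c<mu j. transposed (d j c) s r) = transposed (\<lambda>s r. \<Sum>j\<in>N. \<Sum>c<mu j. d j c s r)"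
    by (simp add: transposed_def fun_eq_iff)
  then show ?thesis
    by (simp add: total_eff_def eff_size_transposed)
qed

lemma start_slot_transposed: "start_slot m mu (\<lambda>j c. transposed (d j c)) pos = start_slot m mu d pos"
  by (simp add: start_slot_def eff_size_transposed fun_eq_iff)

lemma recv_load_eq_send_load_transposed:
  "recv_load m N mu sigma x t r = send_load m N mu (\<lambda>j c y. transposed (sigma j c y)) x t r"
  unfolding recv_load_def send_load_def transposed_def ..

context
  fixes m :: nat and N :: "'j set" and mu d E pos sigma
  assumes sched: "step1_schedule m N mu d E pos sigma"
begin

lemma step1_coflowD:
  assumes "j \<in> N" "c < mu j"
  shows "t < start_slot m mu d pos j c \<or> start_slot m mu d pos j c + eff_size m (d j c) \<le> t
           \<Longrightarrow> sigma j c t s r = 0"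
    and "s < m \<Longrightarrow> r < m \<Longrightarrow>
      (\<Sum>t\<in>{start_slot m mu d pos j c..<start_slot m mu d pos j c + eff_size m (d j c)}. sigma j c t s r)
        = d j c s r"
    and "s < m \<Longrightarrow> (\<Sum>r<m. sigma j c t s r) \<le> 1"
  using bspec[OF sched[unfolded step1_schedule_def Let_def] assms(1)] assms(2) by auto

lemma step1_windows_disjoint:
  assumes "j \<in> N" "c1 < mu j" "c2 < mu j" "c1 \<noteq> c2"
  shows "start_slot m mu d pos j c1 + eff_size m (d j c1) \<le> start_slot m mu d pos j c2 \<or>
         start_slot m mu d pos j c2 + eff_size m (d j c2) \<le> start_slot m mu d pos j c1"
proof -
  have "inj_on (pos j) {0..<mu j}"
    using bspec[OF sched[unfolded step1_schedule_def] assms(1)] by (simp add: bij_betw_def)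
  then have "pos j c1 \<noteq> pos j c2"
    using assms(2-4) by (simp add: inj_on_eq_iff)
  then consider "pos j c1 < pos j c2" | "pos j c2 < pos j c1"
    by linarith
  then show ?thesis
  proof cases
    case 1
    from start_slot_add_eff_size_le[where mu = mu and j = j and pos = pos, OF assms(2) this] show ?thesis
      by (rule disjI1)
  next
    case 2
    from start_slot_add_eff_size_le[where mu = mu and j = j and pos = pos, OF assms(3) this] show ?thesis
      by (rule disjI2)
  qed
qed

lemma step1_send_profile_le_1:
  assumes "j \<in> N" "i < m"
  shows "(\<Sum>c<mu j. \<Sum>r<m. sigma j c y i r) \<le> 1"
proof (cases "\<exists>c<mu j. start_slot m mu d pos j c \<le> y \<and> y < start_slot m mu d pos j c + eff_size m (d j c)")
  case True
  then obtain c where c: "c < mu j" "start_slot m mu d pos j c \<le> y"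
      "y < start_slot m mu d pos j c + eff_size m (d j c)"
    by blast
  have "sigma j c' y i r = 0" if "c' < mu j" "c' \<noteq> c" for c' r
  proof (rule step1_coflowD(1)[OF assms(1) that(1)])
    show "y < start_slot m mu d pos j c' \<or> start_slot m mu d pos j c' + eff_size m (d j c') \<le> y"
      using step1_windows_disjoint[OF assms(1) that(1) c(1) that(2)] c(2,3) by auto
  qed
  then have "(\<Sum>c<mu j. \<Sum>r<m. sigma j c y i r) = (\<Sum>r<m. sigma j c y i r)"
    using c(1) by (subst sum.remove[of _ c]) auto
  then show ?thesis
    using step1_coflowD(3)[OF assms(1) c(1) assms(2)] by simp
next
  case False
  have "sigma j c y i r = 0" if "c < mu j" for c r
    using False step1_coflowD(1)[OF assms(1) that] that by (meson not_le)
  then show ?thesis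
    by simp
qed

lemma step1_send_profile_sum_le:
  assumes "j \<in> N" "i < m" "finite Y"
  shows "(\<Sum>y\<in>Y. \<Sum>c<mu j. \<Sum>r<m. sigma j c y i r) \<le> (\<Sum>c<mu j. \<Sum>r<m. d j c i r)"
proof -
  have window_sum: "(\<Sum>y\<in>Y. sigma j c y i r) \<le> d j c i r" if "c < mu j" "r < m" for c r
  proof -
    let ?W = "{start_slot m mu d pos j c..<start_slot m mu d pos j c + eff_size m (d j c)}"
    have "sigma j c y i r = 0" if "y \<notin> ?W" for y
      using that by (intro step1_coflowD(1)[OF assms(1) \<open>c < mu j\<close>]) auto
    then have "(\<Sum>y\<in>Y. sigma j c y i r) = (\<Sum>y\<in>Y \<inter> ?W. sigma j c y i r)"
      using assms(3) by (intro sum.mono_neutral_right) auto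
    also have "\<dots> \<le> (\<Sum>y\<in>?W. sigma j c y i r)"
      by (rule sum_mono2) auto
    finally show ?thesis
      using step1_coflowD(2)[OF assms(1) that(1) assms(2) that(2)] by simp
  qed
  have "(\<Sum>y\<in>Y. \<Sum>c<mu j. \<Sum>r<m. sigma j c y i r) = (\<Sum>c<mu j. \<Sum>y\<in>Y. \<Sum>r<m. sigma j c y i r)"
    by (rule sum.swap)
  also have "\<dots> = (\<Sum>c<mu j. \<Sum>r<m. \<Sum>y\<in>Y. sigma j c y i r)"
    by (intro sum.cong refl sum.swap)
  also have "\<dots> \<le> (\<Sum>c<mu j. \<Sum>r<m. d j c i r)"
    using window_sum by (intro sum_mono) auto
  finally show ?thesis .
qed

lemma step1_schedule_transposed:
  "step1_schedule m N mu (\<lambda>j c. transposed (d j c)) E pos (\<lambda>j c y. transposed (sigma j c y))"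
  using sched unfolding step1_schedule_def Let_def start_slot_transposed eff_size_transposed
  unfolding transposed_def by blast

lemma send_load_choose_sum_le:
  assumes "finite N" "0 < \<beta>" "i < m"
  shows "(\<Sum>x\<in>PiE N (\<lambda>_. {0..max_delay \<beta> (total_eff m N mu d)}). real (send_load m N mu sigma x t i choose k))
     \<le> real (Suc (max_delay \<beta> (total_eff m N mu d))) ^ card N * \<beta> ^ k / fact k"
proof -
  have load: "send_load m N mu sigma x t i
      = (\<Sum>j\<in>N. if x j \<le> t then (\<Sum>c<mu j. \<Sum>r<m. sigma j c (t - x j) i r) else 0)" for x
    unfolding send_load_def by (intro sum.cong) auto
  have "(\<Sum>j\<in>N. \<Sum>y\<le>t. \<Sum>c<mu j. \<Sum>r<m. sigma j c y i r) \<le> (\<Sum>j\<in>N. \<Sum>c<mu j. \<Sum>r<m. d j c i r)"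
    using assms by (intro sum_mono step1_send_profile_sum_le) auto
  also have "\<dots> \<le> total_eff m N mu d"
    using assms(3) by (rule send_demand_le_total_eff)
  finally have total: "(\<Sum>j\<in>N. \<Sum>y\<le>t. \<Sum>c<mu j. \<Sum>r<m. sigma j c y i r) \<le> total_eff m N mu d" .
  show ?thesis
    unfolding load
    by (rule sum_PiE_delayed_choose_le[OF assms(1) step1_send_profile_le_1[OF _ assms(3)] total
          total_le_max_delay[OF assms(2)]])
qed

end

lemma recv_load_choose_sum_le:
  assumes "step1_schedule m N mu d E pos sigma" "finite N" "0 < \<beta>" "r < m"
  shows "(\<Sum>x\<in>PiE N (\<lambda>_. {0..max_delay \<beta> (total_eff m N mu d)}). real (recv_load m N mu sigma x t r choose k))
     \<le> real (Suc (max_delay \<beta> (total_eff m N mu d))) ^ card N * \<beta> ^ k / fact k"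
  using send_load_choose_sum_le[OF step1_schedule_transposed[OF assms(1)] assms(2-4)]
  by (simp add: recv_load_eq_send_load_transposed total_eff_transposed)

lemma alpha_le_add_sum_choose:
  assumes "1 \<le> k"
  shows "alpha m N mu sigma x t \<le> k + (\<Sum>i<m. send_load m N mu sigma x t i choose k)
                                      + (\<Sum>i<m. recv_load m N mu sigma x t i choose k)"
    (is "_ \<le> ?T")
proof -
  have "send_load m N mu sigma x t i \<le> ?T" "recv_load m N mu sigma x t i \<le> ?T" if "i < m" for i
    using le_add_choose[OF assms, of "send_load m N mu sigma x t i"]
      le_add_choose[OF assms, of "recv_load m N mu sigma x t i"]
      member_le_sum[of i "{..<m}" "\<lambda>i. send_load m N mu sigma x t i choose k"]
      member_le_sum[of i "{..<m}" "\<lambda>i. recv_load m N mu sigma x t i choose k"] that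
    by auto
  then show ?thesis
    using assms unfolding alpha_def by (auto intro!: Max.boundedI)
qed

lemma expected_alpha_le:
  assumes sched: "step1_schedule m N mu d E pos sigma" and "finite N" "0 < \<beta>" "1 \<le> k"
  shows "expected_alpha \<beta> m N mu d sigma t \<le> real k + 2 * real m * \<beta> ^ k / fact k"
proof -
  define L where "L = max_delay \<beta> (total_eff m N mu d)"
  define X where "X = PiE N (\<lambda>_. {0..L})"
  define B where "B = real (Suc L) ^ card N * \<beta> ^ k / fact k"
  let ?send = "\<lambda>x i. real (send_load m N mu sigma x t i choose k)"
  let ?recv = "\<lambda>x i. real (recv_load m N mu sigma x t i choose k)"
  have card_X: "real (card X) = real (Suc L) ^ card N"
    using assms(2) by (simp add: X_def card_PiE)
  have "(\<Sum>x\<in>X. ?send x i) \<le> B" "(\<Sum>x\<in>X. ?recv x i) \<le> B" if "i < m" for i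
    using send_load_choose_sum_le[OF sched assms(2,3) that] recv_load_choose_sum_le[OF sched assms(2,3) that]
    by (simp_all add: X_def B_def L_def)
  then have sums_le: "(\<Sum>i<m. \<Sum>x\<in>X. ?send x i) \<le> real m * B" "(\<Sum>i<m. \<Sum>x\<in>X. ?recv x i) \<le> real m * B"
    using sum_bounded_above[of "{..<m}" "\<lambda>i. \<Sum>x\<in>X. ?send x i" B]
      sum_bounded_above[of "{..<m}" "\<lambda>i. \<Sum>x\<in>X. ?recv x i" B]
    by simp_all
  have "(\<Sum>x\<in>X. real (alpha m N mu sigma x t)) \<le> (\<Sum>x\<in>X. real k + (\<Sum>i<m. ?send x i) + (\<Sum>i<m. ?recv x i))"
    using of_nat_mono[OF alpha_le_add_sum_choose[OF assms(4)], where 'a = real] by (intro sum_mono) simp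
  also have "\<dots> = real (card X) * real k + (\<Sum>i<m. \<Sum>x\<in>X. ?send x i) + (\<Sum>i<m. \<Sum>x\<in>X. ?recv x i)"
    by (simp add: sum.distrib sum.swap[of _ X])
  also have "\<dots> \<le> real (card X) * real k + real m * B + real m * B"
    using sums_le by linarith
  also have "\<dots> = real (card X) * (real k + 2 * real m * \<beta> ^ k / fact k)"
    by (simp add: card_X B_def field_simps)
  finally show ?thesis
    using card_X by (simp add: expected_alpha_def X_def L_def pos_divide_le_eq mult.commute)
qed

theorem lemma4:
  fixes \<beta> :: real
  assumes "\<beta> > 1 / exp 1"
  shows "\<exists>C m0. \<forall>m \<ge> m0. \<forall>(N :: nat set) mu d E pos sigma (t :: nat).
           finite N \<and> N \<noteq> {} \<and> step1_schedule m N mu d E pos sigma \<and>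
           real t \<le> (real (Max (mu ` N)) + 1 / \<beta>) * real (total_eff m N mu d)
           \<longrightarrow> expected_alpha \<beta> m N mu d sigma t \<le> C * (ln (real m) / ln (ln (real m)))"
proof -
  have "0 < 1 / exp (1 :: real)"
    by simp
  with assms have "0 < \<beta>"
    by linarith
  then obtain m0 where m0: "\<And>m. m \<ge> m0 \<Longrightarrow> \<exists>k\<ge>1. real k + 2 * real m * \<beta> ^ k / fact k
                                                  \<le> 4 * (ln (real m) / ln (ln (real m)))"
    using eventually_exists_choose_bound[OF \<open>0 < \<beta>\<close>] unfolding eventually_sequentially by blast
  show ?thesis
  proof (intro exI allI impI)
    fix m N mu d E pos sigma t
    assume "m0 \<le> m" and hyps: "finite (N :: nat set) \<and> N \<noteq> {} \<and> step1_schedule m N mu d E pos sigma \<and>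
      real t \<le> (real (Max (mu ` N)) + 1 / \<beta>) * real (total_eff m N mu d)"
    then obtain k where "1 \<le> k"
      and k_bound: "real k + 2 * real m * \<beta> ^ k / fact k \<le> 4 * (ln (real m) / ln (ln (real m)))"
      using m0 by blast
    have "expected_alpha \<beta> m N mu d sigma t \<le> real k + 2 * real m * \<beta> ^ k / fact k"
      using hyps by (intro expected_alpha_le \<open>0 < \<beta>\<close> \<open>1 \<le> k\<close>) auto
    also note k_bound
    finally show "expected_alpha \<beta> m N mu d sigma t \<le> 4 * (ln (real m) / ln (ln (real m)))" .
  qed
qed

end
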